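(* Let $g\in\mathbb{Z}^+$, let $\mathcal{H}$ be a hierarchical generator with lineage $\mathcal{L}$ and $\mathrm{gap}(\mathcal{H})\le g$, and let $\varphi\in\mathcal{H}$. Then the family $\mathfrak{R}_g(\mathcal{H},\varphi)$ of all hierarchical generators $\mathcal{H}_*$ whose lineage $\mathcal{L}_*$ satisfies $\mathcal{L}\cup\{\varphi\}\subset\mathcal{L}_*$ and $\mathrm{gap}(\mathcal{H}_* )\le g$ has a least element $\bar{\mathcal{H}}$, i.e. its lineage $\bar{\mathcal{L}}$ is contained in the lineage of every member of the family. Moreover, for every $\psi\in(\bar{\mathcal{L}}\setminus\mathcal{L})\setminus\{\varphi\}$ there is an integer $k$ with $1\le k\le\lfloor\ell_\varphi/g\rfloor$ and $\psi\in\mathcal{O}^k(\varphi,-g,\mathfrak{B})$.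
   Context: Fix integers $d\ge1$, $n\ge2$, $m\ge2$; $s=n-1$, $p=m-1$. B-splines $\varphi^\ell_{\vec i}(\vec x)=\prod_kQ(n^\ell x_k-i_k)$ for $\ell\ge0$, $\vec i\in\mathbb{Z}^d$, $Q$ the uniform B-spline of order $m$ with knots $0,\dots,m$; $\mathfrak{B}$ the set of all of them, $\ell_\varphi$ the level; $\mathcal{B}^0=\{\varphi^0_{\vec i}:\vec i\in[-p:0]^d\}$. Children $\mathrm{ch}(\varphi^\ell_{\vec i})=\{\varphi^{\ell+1}_{\vec k}:n\vec i\le\vec k\le n\vec i+sm\}$, extended to sets by union. Cells $I^\ell_{\vec i}=\prod_k[i_kn^{-\ell},(i_k+1)n^{-\ell})$, cell children $\mathrm{ch}(I^\ell_{\vec i})=\{I^{\ell+1}_{\vec k}:n\vec i\le\vec k\le n\vec i+s\}$, $\mathrm{ch}^k$ iterated, $\mathrm{ch}^{-k}(I)=\{J:I\in\mathrm{ch}^k(J)\}$. $\mathbb{I}(\varphi^\ell_{\vec i})=\{I^\ell_{\vec k}:\vec i\le\vec k\le\vec i+p\}$, $\mathbb{I}^k(\varphi)=\mathrm{ch}^k(\mathbb{I}(\varphi))$ ($k\in\mathbb{Z}$), $\mathbb{B}^k(I)=\{\varphi\in\mathfrak{B}:I\in\mathbb{I}^{-k}(\varphi)\}$, extended to sets by union. $\mathcal{O}(\mathcal{F},j,\mathcal{H})=\mathbb{B}^j(\mathbb{I}(\mathcal{F}))\cap\mathcal{H}$, $\mathcal{O}(\varphi,j,\mathcal{H})=\mathcal{O}(\{\varphi\},j,\mathcal{H})$,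 $\mathcal{O}^{k+1}(\mathcal{F},j,\mathcal{H})=\mathcal{O}(\mathcal{O}^k(\mathcal{F},j,\mathcal{H}),j,\mathcal{H})$, $\mathcal{O}^1=\mathcal{O}$. A lineage is a finite $\mathcal{L}\subset\mathfrak{B}$ with $\mathcal{L}\subset\mathcal{B}^0\cup\mathrm{ch}(\mathcal{L})$; its hierarchical generator is $(\mathcal{B}^0\cup\mathrm{ch}(\mathcal{L}))\setminus\mathcal{L}$ (the lineage is determined by the generator). $\mathrm{gap}_{\mathcal{H}}(\varphi)=\sup\{g\in\mathbb{Z}:\mathcal{O}(\varphi,-g,\mathcal{H})\neq\emptyset\}$ for $\varphi\in\mathcal{H}$, and $\mathrm{gap}(\mathcal{H})=\max_{\varphi\in\mathcal{H}}\mathrm{gap}_{\mathcal{H}}(\varphi)$. *)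

theory Defs
  imports Main
begin

text \<open>A B-spline phi^l_i (resp. a cell I^l_i) is represented by the pair (l, i),
  with l :: nat the level and i :: int list the index vector of length d.\<close>

type_synonym bspl = "nat \<times> int list"
type_synonym cell = "nat \<times> int list"

definition lev :: "bspl \<Rightarrow> nat" where "lev phi = fst phi"

definition allB :: "nat \<Rightarrow> bspl set" where
  "allB d = {(l, i). length i = d}"

definition B0 :: "nat \<Rightarrow> nat \<Rightarrow> bspl set" where
  "B0 d m = {(0, i) | i. length i = d \<and> (\<forall>j<d. - (int m - 1) \<le> i ! j \<and> i ! j \<le> 0)}"

definition chB :: "nat \<Rightarrow> nat \<Rightarrow> bspl \<Rightarrow> bspl set" where
  "chB n m phi = {(Suc (fst phi), k) | k. length k = length (snd phi) \<and>
     (\<forall>j<length k. int n * snd phi ! j \<le> k ! j \<and>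
                    k ! j \<le> int n * snd phi ! j + (int n - 1) * int m)}"

definition chBs :: "nat \<Rightarrow> nat \<Rightarrow> bspl set \<Rightarrow> bspl set" where
  "chBs n m L = (\<Union>phi\<in>L. chB n m phi)"

definition chC :: "nat \<Rightarrow> cell \<Rightarrow> cell set" where
  "chC n I = {(Suc (fst I), k) | k. length k = length (snd I) \<and>
     (\<forall>j<length k. int n * snd I ! j \<le> k ! j \<and> k ! j \<le> int n * snd I ! j + (int n - 1))}"

definition chCs :: "nat \<Rightarrow> cell set \<Rightarrow> cell set" where
  "chCs n S = (\<Union>I\<in>S. chC n I)"

definition chZ :: "nat \<Rightarrow> int \<Rightarrow> cell set \<Rightarrow> cell set" where
  "chZ n k S = (if 0 \<le> k then (chCs n ^^ nat k) S
               else (\<Union>I\<in>S. {J. I \<in> (chCs n ^^ nat (- k)) {J}}))"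

definition suppC :: "nat \<Rightarrow> bspl \<Rightarrow> cell set" where
  "suppC m phi = {(fst phi, k) | k. length k = length (snd phi) \<and>
     (\<forall>j<length k. snd phi ! j \<le> k ! j \<and> k ! j \<le> snd phi ! j + (int m - 1))}"

definition suppCs :: "nat \<Rightarrow> bspl set \<Rightarrow> cell set" where
  "suppCs m F = (\<Union>phi\<in>F. suppC m phi)"

definition suppCk :: "nat \<Rightarrow> nat \<Rightarrow> int \<Rightarrow> bspl \<Rightarrow> cell set" where
  "suppCk n m k phi = chZ n k (suppC m phi)"

definition BBk :: "nat \<Rightarrow> nat \<Rightarrow> nat \<Rightarrow> int \<Rightarrow> cell \<Rightarrow> bspl set" where
  "BBk d n m k I = {phi \<in> allB d. I \<in> suppCk n m (- k) phi}"

definition BBks :: "nat \<Rightarrow> nat \<Rightarrow> nat \<Rightarrow> int \<Rightarrow> cell set \<Rightarrow> bspl set" where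
  "BBks d n m k S = (\<Union>I\<in>S. BBk d n m k I)"

definition Ov :: "nat \<Rightarrow> nat \<Rightarrow> nat \<Rightarrow> bspl set \<Rightarrow> int \<Rightarrow> bspl set \<Rightarrow> bspl set" where
  "Ov d n m F j H = BBks d n m j (suppCs m F) \<inter> H"

definition Ovpow :: "nat \<Rightarrow> nat \<Rightarrow> nat \<Rightarrow> nat \<Rightarrow> bspl set \<Rightarrow> int \<Rightarrow> bspl set \<Rightarrow> bspl set" where
  "Ovpow d n m k F j H = ((\<lambda>S. Ov d n m S j H) ^^ k) F"

definition lineage :: "nat \<Rightarrow> nat \<Rightarrow> nat \<Rightarrow> bspl set \<Rightarrow> bool" where
  "lineage d n m L \<longleftrightarrow> finite L \<and> L \<subseteq> allB d \<and> L \<subseteq> B0 d m \<union> chBs n m L"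

definition hgen :: "nat \<Rightarrow> nat \<Rightarrow> nat \<Rightarrow> bspl set \<Rightarrow> bspl set" where
  "hgen d n m L = (B0 d m \<union> chBs n m L) - L"

definition gapAt :: "nat \<Rightarrow> nat \<Rightarrow> nat \<Rightarrow> bspl set \<Rightarrow> bspl \<Rightarrow> int" where
  "gapAt d n m H phi = Sup {g :: int. Ov d n m {phi} (- g) H \<noteq> {}}"

definition gap :: "nat \<Rightarrow> nat \<Rightarrow> nat \<Rightarrow> bspl set \<Rightarrow> int" where
  "gap d n m H = Max (gapAt d n m H ` H)"

end

theory Submission
  imports Defs
begin

text \<open>The least refinement is \<open>L \<union> R\<close>, where \<open>R = \<Union>k. O\<^sup>k(\<phi>, -g, H)\<close> with \<open>H\<close> the generator
  of \<open>L\<close>: the elements of \<open>H\<close> reachable from \<open>\<phi>\<close> by steps of overlap depth exactly \<open>g\<close>.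
  Every admissible refinement contains \<open>R\<close>: if it keeps \<open>\<chi>\<close> but not a \<open>\<psi>\<close> one step further,
  then \<open>\<psi>\<close> stays in its generator, while descending from \<open>\<chi>\<close> through children of its (finite)
  lineage produces a generator element overlapping \<open>\<psi>\<close> at depth greater than \<open>g\<close>.
  Conversely, refining exactly \<open>R\<close> keeps the gap at most \<open>g\<close>: a new generator element is a child
  of an element of \<open>R\<close>, replacing it by that parent shifts overlap depths by one, and depth
  exactly \<open>g\<close> from \<open>R\<close> into \<open>H\<close> is impossible because \<open>R\<close> is closed under such steps.
  Each step lowers the level by \<open>g\<close>, which bounds \<open>k\<close> by \<open>lev \<phi> / g\<close>.\<close>

section \<open>Cells, supports and children\<close>

lemma int_le_div_iff:
  fixes a k x :: int
  assumes "0 < k"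
  shows "a \<le> x div k \<longleftrightarrow> k * a \<le> x"
proof
  assume "a \<le> x div k"
  then have "k * a \<le> k * (x div k)" using assms by simp
  also have "\<dots> \<le> x"
    using mult_div_mod_eq[of k x] pos_mod_sign[OF assms, of x] by linarith
  finally show "k * a \<le> x" .
next
  assume "k * a \<le> x"
  then have "k * a div k \<le> x div k" using assms by (rule zdiv_mono1)
  then show "a \<le> x div k" using assms by simp
qed

lemma int_div_le_iff:
  fixes b k x :: int
  assumes "0 < k"
  shows "x div k \<le> b \<longleftrightarrow> x < k * (b + 1)"
  using int_le_div_iff[OF assms, of "b + 1" x] by linarith

lemma int_div_eq_iff:
  fixes i k x :: int
  assumes "0 < k"
  shows "x div k = i \<longleftrightarrow> k * i \<le> x \<and> x \<le> k * i + (k - 1)"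
proof -
  have "x div k = i \<longleftrightarrow> i \<le> x div k \<and> x div k \<le> i" by linarith
  also have "\<dots> \<longleftrightarrow> k * i \<le> x \<and> x < k * (i + 1)"
    using int_le_div_iff[OF assms] int_div_le_iff[OF assms] by simp
  also have "\<dots> \<longleftrightarrow> k * i \<le> x \<and> x \<le> k * i + (k - 1)"
    by (auto simp: algebra_simps)
  finally show ?thesis .
qed

lemma chC_iff_div:
  assumes "1 \<le> n"
  shows "J \<in> chC n I \<longleftrightarrow> fst J = Suc (fst I) \<and> snd I = map (\<lambda>x. x div int n) (snd J)"
proof -
  have n: "0 < int n" using assms by simp
  have "J \<in> chC n I \<longleftrightarrow> fst J = Suc (fst I) \<and> length (snd J) = length (snd I) \<and>
      (\<forall>j<length (snd J). int n * snd I ! j \<le> snd J ! j \<and> snd J ! j \<le> int n * snd I ! j + (int n - 1))"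
    unfolding chC_def by (cases J) auto
  also have "\<dots> \<longleftrightarrow> fst J = Suc (fst I) \<and> length (snd J) = length (snd I) \<and>
      (\<forall>j<length (snd J). snd J ! j div int n = snd I ! j)"
    by (simp only: int_div_eq_iff[OF n])
  also have "\<dots> \<longleftrightarrow> fst J = Suc (fst I) \<and> snd I = map (\<lambda>x. x div int n) (snd J)"
    by (auto simp: list_eq_iff_nth_eq)
  finally show ?thesis .
qed

lemma mem_chCs_iff: "J \<in> chCs n S \<longleftrightarrow> (\<exists>I\<in>S. J \<in> chC n I)"
  by (simp add: chCs_def)

lemma chC_parent_unique: "1 \<le> n \<Longrightarrow> J \<in> chC n I \<Longrightarrow> J \<in> chC n I' \<Longrightarrow> I = I'"
  by (simp add: chC_iff_div prod_eq_iff)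

lemma chCs_funpow_mono: "A \<subseteq> B \<Longrightarrow> (chCs n ^^ j) A \<subseteq> (chCs n ^^ j) B"
  by (induction j) (auto simp: chCs_def)

lemma fst_chCs_funpow: "J \<in> (chCs n ^^ j) S \<Longrightarrow> \<exists>I\<in>S. fst J = fst I + j"
proof (induction j arbitrary: J)
  case 0
  then show ?case by auto
next
  case (Suc j)
  then obtain K where "K \<in> (chCs n ^^ j) S" and "J \<in> chC n K"
    by (auto simp: mem_chCs_iff)
  moreover from this obtain I where "I \<in> S" "fst K = fst I + j"
    using Suc.IH by blast
  ultimately show ?case by (auto simp: chC_def)
qed

lemma fst_suppC: "I \<in> suppC m phi \<Longrightarrow> fst I = fst phi"
  by (auto simp: suppC_def)

lemma mem_suppC_self: "1 \<le> m \<Longrightarrow> phi \<in> suppC m phi"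
  by (cases phi) (auto simp: suppC_def)

lemma suppC_chB_subset:
  assumes "1 \<le> n" and "eta \<in> chB n m chi"
  shows "suppC m eta \<subseteq> chCs n (suppC m chi)"
proof
  fix J assume J: "J \<in> suppC m eta"
  obtain l i where chi: "chi = (l, i)" by (cases chi)
  obtain k where eta: "eta = (Suc l, k)" and "length k = length i"
    and k: "\<forall>j<length k. int n * i ! j \<le> k ! j \<and> k ! j \<le> int n * i ! j + (int n - 1) * int m"
    using assms(2) chi by (auto simp: chB_def)
  obtain c where Jc: "J = (Suc l, c)" and "length c = length k"
    and c: "\<forall>j<length c. k ! j \<le> c ! j \<and> c ! j \<le> k ! j + (int m - 1)"
    using J eta by (auto simp: suppC_def)
  have n: "0 < int n" using assms(1) by simp
  define I where "I = (l, map (\<lambda>x. x div int n) c)"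
  have "J \<in> chC n I" using assms(1) by (simp add: chC_iff_div I_def Jc)
  moreover have "I \<in> suppC m chi"
    unfolding suppC_def chi I_def
  proof (clarsimp, intro conjI allI impI)
    show "length c = length i" using \<open>length c = length k\<close> \<open>length k = length i\<close> by simp
    fix j assume "j < length c"
    then have "int n * i ! j \<le> c ! j" and "c ! j < int n * (i ! j + (int m - 1) + 1)"
      using k c \<open>length c = length k\<close> by (fastforce simp: algebra_simps)+
    then show "i ! j \<le> c ! j div int n" and "c ! j div int n \<le> i ! j + (int m - 1)"
      by (simp_all add: int_le_div_iff[OF n] int_div_le_iff[OF n])
  qed
  ultimately show "J \<in> chCs n (suppC m chi)" by (auto simp: mem_chCs_iff)
qed

lemma chB_covers_chC:
  assumes "1 \<le> n" and "1 \<le> m" and "I \<in> suppC m chi" and "I' \<in> chC n I"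
  shows "\<exists>eta\<in>chB n m chi. I' \<in> suppC m eta"
proof -
  obtain l i where chi: "chi = (l, i)" by (cases chi)
  obtain e where I: "I = (l, e)" and le: "length e = length i"
    and e: "\<forall>j<length e. i ! j \<le> e ! j \<and> e ! j \<le> i ! j + (int m - 1)"
    using assms(3) chi by (auto simp: suppC_def)
  obtain c where I': "I' = (Suc l, c)" and lc: "length c = length e"
    and c: "\<forall>j<length c. int n * e ! j \<le> c ! j \<and> c ! j \<le> int n * e ! j + (int n - 1)"
    using assms(4) I by (auto simp: chC_def)
  have c_bounds: "int n * i ! j \<le> c ! j" "c ! j \<le> int n * (i ! j + (int m - 1)) + (int n - 1)"
    if "j < length i" for j
  proof -
    have "i ! j \<le> e ! j" "e ! j \<le> i ! j + (int m - 1)" using e le that by auto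
    then have "int n * i ! j \<le> int n * e ! j" "int n * e ! j \<le> int n * (i ! j + (int m - 1))"
      by (simp_all add: mult_left_mono)
    moreover have "int n * e ! j \<le> c ! j" "c ! j \<le> int n * e ! j + (int n - 1)"
      using c le lc that by auto
    ultimately show "int n * i ! j \<le> c ! j" "c ! j \<le> int n * (i ! j + (int m - 1)) + (int n - 1)"
      by linarith+
  qed
  \<comment> \<open>In each coordinate, the first child index whose support reaches \<open>I'\<close>.\<close>
  define k where "k = map (\<lambda>j. max (int n * i ! j) (c ! j - (int m - 1))) [0..<length i]"
  have "int m * 1 \<le> int m * int n" using assms(1) by (intro mult_left_mono) auto
  then have "max (int n * i ! j) (c ! j - (int m - 1)) \<le> int n * i ! j + (int n - 1) * int m"
    if "j < length i" for j
    using c_bounds[OF that] by (simp add: algebra_simps)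
  then have "(Suc l, k) \<in> chB n m chi"
    by (auto simp: chB_def chi k_def)
  moreover have "I' \<in> suppC m (Suc l, k)"
    using assms(2) c_bounds le lc by (auto simp: suppC_def I' k_def)
  ultimately show ?thesis by blast
qed

section \<open>Overlap depth\<close>

text \<open>For \<open>\<psi> \<in> allB d\<close>, \<open>overlaps n m j \<eta> \<psi>\<close> is the paper's \<open>\<psi> \<in> O(\<eta>, -j, B)\<close>; see mem_Ov_iff.\<close>

definition overlaps :: "nat \<Rightarrow> nat \<Rightarrow> nat \<Rightarrow> bspl \<Rightarrow> bspl \<Rightarrow> bool" where
  "overlaps n m j eta psi \<longleftrightarrow> suppC m eta \<inter> (chCs n ^^ j) (suppC m psi) \<noteq> {}"

lemma overlaps_refl: "1 \<le> m \<Longrightarrow> overlaps n m 0 phi phi"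
  using mem_suppC_self[of m phi] by (auto simp: overlaps_def)

lemma overlaps_lev: "overlaps n m j eta psi \<Longrightarrow> lev eta = lev psi + j"
  unfolding overlaps_def lev_def by (metis disjoint_iff fst_chCs_funpow fst_suppC)

lemma overlaps_parent_left:
  assumes "1 \<le> n" and "overlaps n m (Suc j) eta psi" and "eta \<in> chB n m chi"
  shows "overlaps n m j chi psi"
proof -
  obtain J K where J: "J \<in> suppC m eta" and K: "K \<in> (chCs n ^^ j) (suppC m psi)" "J \<in> chC n K"
    using assms(2) by (auto simp: overlaps_def mem_chCs_iff)
  have "J \<in> chCs n (suppC m chi)" using suppC_chB_subset[OF assms(1,3)] J by blast
  then obtain I where "I \<in> suppC m chi" "J \<in> chC n I" by (auto simp: mem_chCs_iff)
  moreover from this have "I = K" using K(2) chC_parent_unique[OF assms(1)] by blast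
  ultimately show ?thesis using K(1) by (auto simp: overlaps_def)
qed

lemma overlaps_parent_right:
  assumes "1 \<le> n" and "overlaps n m j eta psi" and "psi \<in> chB n m chi"
  shows "overlaps n m (Suc j) eta chi"
proof -
  have "(chCs n ^^ j) (suppC m psi) \<subseteq> (chCs n ^^ j) (chCs n (suppC m chi))"
    by (rule chCs_funpow_mono[OF suppC_chB_subset[OF assms(1,3)]])
  also have "\<dots> = (chCs n ^^ Suc j) (suppC m chi)" by (simp add: funpow_swap1)
  finally show ?thesis using assms(2) unfolding overlaps_def by blast
qed

lemma overlaps_chB_ex:
  assumes "1 \<le> n" and "1 \<le> m" and "overlaps n m j chi psi"
  shows "\<exists>eta\<in>chB n m chi. overlaps n m (Suc j) eta psi"
proof -
  obtain I where I: "I \<in> suppC m chi" "I \<in> (chCs n ^^ j) (suppC m psi)"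
    using assms(3) by (auto simp: overlaps_def)
  define I' where "I' = (Suc (fst I), map (\<lambda>x. int n * x) (snd I))"
  have I': "I' \<in> chC n I" using assms(1) by (simp add: chC_iff_div I'_def comp_def)
  then obtain eta where "eta \<in> chB n m chi" "I' \<in> suppC m eta"
    using chB_covers_chC[OF assms(1,2) I(1)] by blast
  moreover have "I' \<in> (chCs n ^^ Suc j) (suppC m psi)" using I(2) I' by (auto simp: mem_chCs_iff)
  ultimately show ?thesis by (auto simp: overlaps_def)
qed

lemma mem_Ov_iff:
  "psi \<in> Ov d n m F (- int j) X \<longleftrightarrow> psi \<in> allB d \<and> psi \<in> X \<and> (\<exists>chi\<in>F. overlaps n m j chi psi)"
  by (auto simp: Ov_def BBks_def BBk_def suppCk_def chZ_def suppCs_def overlaps_def)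

lemma Ov_mono: "F \<subseteq> F' \<Longrightarrow> X \<subseteq> Y \<Longrightarrow> Ov d n m F j X \<subseteq> Ov d n m F' j Y"
  by (auto simp: Ov_def BBks_def suppCs_def)

lemma Ovpow_0 [simp]: "Ovpow d n m 0 F j X = F"
  by (simp add: Ovpow_def)

lemma Ovpow_Suc [simp]: "Ovpow d n m (Suc k) F j X = Ov d n m (Ovpow d n m k F j X) j X"
  by (simp add: Ovpow_def)

lemma Ovpow_mono: "X \<subseteq> Y \<Longrightarrow> Ovpow d n m k F j X \<subseteq> Ovpow d n m k F j Y"
  by (induction k) (simp_all add: Ov_mono)

lemma Ovpow_subset: "phi \<in> X \<Longrightarrow> Ovpow d n m k {phi} j X \<subseteq> X"
  by (cases k) (auto simp: Ov_def)

lemma lev_Ovpow: "psi \<in> Ovpow d n m k {phi} (- int j) X \<Longrightarrow> lev phi = lev psi + k * j"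
proof (induction k arbitrary: psi)
  case 0
  then show ?case by simp
next
  case (Suc k)
  then obtain chi where "chi \<in> Ovpow d n m k {phi} (- int j) X" and "overlaps n m j chi psi"
    by (auto simp: mem_Ov_iff)
  then show ?case using Suc.IH overlaps_lev by fastforce
qed

lemma Ov_singleton_nonempty_iff:
  assumes "0 \<le> x"
  shows "Ov d n m {eta} (- x) H \<noteq> {} \<longleftrightarrow> (\<exists>psi\<in>H \<inter> allB d. overlaps n m (nat x) eta psi)"
  using mem_Ov_iff[of _ d n m "{eta}" "nat x" H] assms by auto

section \<open>Lineages, generators and the gap\<close>

lemma finite_bounded_int_lists:
  "finite {xs :: int list. length xs = d \<and> (\<forall>j<d. a j \<le> xs ! j \<and> xs ! j \<le> b j)}"
proof (rule finite_subset)
  show "finite {xs. set xs \<subseteq> (\<Union>j<d. {a j..b j}) \<and> length xs = d}"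
    by (rule finite_lists_length_eq) auto
next
  show "{xs :: int list. length xs = d \<and> (\<forall>j<d. a j \<le> xs ! j \<and> xs ! j \<le> b j)}
      \<subseteq> {xs. set xs \<subseteq> (\<Union>j<d. {a j..b j}) \<and> length xs = d}"
    by (fastforce simp: in_set_conv_nth)
qed

lemma finite_B0: "finite (B0 d m)"
proof -
  have "B0 d m = Pair 0 ` {xs. length xs = d \<and> (\<forall>j<d. - (int m - 1) \<le> xs ! j \<and> xs ! j \<le> 0)}"
    by (auto simp: B0_def)
  then show ?thesis using finite_bounded_int_lists by simp
qed

lemma finite_chB: "finite (chB n m chi)"
proof -
  let ?d = "length (snd chi)"
  have "chB n m chi = Pair (Suc (fst chi)) ` {xs. length xs = ?d \<and> (\<forall>j<?d.
      int n * snd chi ! j \<le> xs ! j \<and> xs ! j \<le> int n * snd chi ! j + (int n - 1) * int m)}"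
    by (auto simp: chB_def)
  then show ?thesis using finite_bounded_int_lists by simp
qed

lemma finite_hgen: "finite L \<Longrightarrow> finite (hgen d n m L)"
  using finite_B0 finite_chB by (auto simp: hgen_def chBs_def)

lemma hgen_subset_allB: "L \<subseteq> allB d \<Longrightarrow> hgen d n m L \<subseteq> allB d"
  by (auto simp: hgen_def chBs_def chB_def B0_def allB_def)

lemma chBs_mono: "L \<subseteq> L' \<Longrightarrow> chBs n m L \<subseteq> chBs n m L'"
  by (auto simp: chBs_def)

lemma lev_chB: "eta \<in> chB n m chi \<Longrightarrow> lev eta = Suc (lev chi)"
  by (auto simp: chB_def lev_def)

lemma hgen_nonempty:
  assumes "1 \<le> n" and "finite L" and "L \<noteq> {}"
  shows "hgen d n m L \<noteq> {}"
proof -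
  have "Max (lev ` L) \<in> lev ` L" using assms(2,3) by simp
  then obtain chi where chi: "chi \<in> L" and "lev chi = Max (lev ` L)" by auto
  then have top: "\<forall>psi\<in>L. lev psi \<le> lev chi" using assms(2) by simp
  define eta where "eta = (Suc (fst chi), map (\<lambda>x. int n * x) (snd chi))"
  have eta: "eta \<in> chB n m chi" using assms(1) by (auto simp: eta_def chB_def)
  then have "eta \<notin> L" using top lev_chB by fastforce
  moreover have "eta \<in> chBs n m L" using eta chi by (auto simp: chBs_def)
  ultimately show ?thesis by (auto simp: hgen_def)
qed

text \<open>Children inherit an overlap one level deeper, and descending through a finite lineage
  must eventually leave it.\<close>

lemma lineage_overlaps_hgen:
  assumes "lineage d n m L" and "1 \<le> n" and "1 \<le> m"
    and "chi \<in> L" and "overlaps n m j chi psi"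
  shows "\<exists>eta\<in>hgen d n m L. \<exists>j'>j. overlaps n m j' eta psi"
  using assms(4,5)
proof (induction "Max (lev ` L) - lev chi" arbitrary: chi j rule: less_induct)
  case less
  have "finite L" using assms(1) by (simp add: lineage_def)
  obtain eta where eta: "eta \<in> chB n m chi" and overlap: "overlaps n m (Suc j) eta psi"
    using overlaps_chB_ex[OF assms(2,3) less.prems(2)] by blast
  show ?case
  proof (cases "eta \<in> L")
    case False
    moreover have "eta \<in> chBs n m L" using eta less.prems(1) by (auto simp: chBs_def)
    ultimately show ?thesis using overlap by (auto simp: hgen_def)
  next
    case True
    then have "lev eta \<le> Max (lev ` L)" using \<open>finite L\<close> by simp
    then have "Max (lev ` L) - lev eta < Max (lev ` L) - lev chi"
      using lev_chB[OF eta] by simp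
    then show ?thesis using less.hyps[OF _ True overlap] by (meson Suc_lessD)
  qed
qed

lemma overlaps_le_gap:
  assumes "finite H" and "H \<subseteq> allB d" and "eta \<in> H" and "psi \<in> H"
    and "overlaps n m j eta psi"
  shows "int j \<le> gap d n m H"
proof -
  let ?S = "{g :: int. Ov d n m {eta} (- g) H \<noteq> {}}"
  have "int j \<in> ?S" using Ov_singleton_nonempty_iff[of "int j"] assms(2,4,5) by auto
  moreover have "bdd_above ?S"
  proof (rule bdd_aboveI)
    fix x assume x: "x \<in> ?S"
    show "x \<le> int (lev eta)"
    proof (cases "0 \<le> x")
      case True
      then obtain psi where "overlaps n m (nat x) eta psi"
        using x Ov_singleton_nonempty_iff by blast
      then show ?thesis using overlaps_lev True by fastforce
    qed simp
  qed
  ultimately have "int j \<le> gapAt d n m H eta" unfolding gapAt_def by (rule cSup_upper)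
  also have "\<dots> \<le> gap d n m H" using assms(1,3) by (simp add: gap_def)
  finally show ?thesis .
qed

lemma gap_leI:
  assumes "finite H" and "H \<noteq> {}" and "H \<subseteq> allB d" and "1 \<le> m" and "0 \<le> g"
    and bound: "\<And>eta psi j. eta \<in> H \<Longrightarrow> psi \<in> H \<Longrightarrow> overlaps n m j eta psi \<Longrightarrow> int j \<le> g"
  shows "gap d n m H \<le> g"
  unfolding gap_def
proof (rule Max.boundedI)
  show "finite (gapAt d n m H ` H)" "gapAt d n m H ` H \<noteq> {}" using assms(1,2) by simp_all
  fix a assume "a \<in> gapAt d n m H ` H"
  then obtain eta where eta: "eta \<in> H" and a: "a = gapAt d n m H eta" by blast
  let ?S = "{g :: int. Ov d n m {eta} (- g) H \<noteq> {}}"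
  have "eta \<in> Ov d n m {eta} (- int 0) H"
    using mem_Ov_iff overlaps_refl[OF assms(4)] eta assms(3) by blast
  then have "(0::int) \<in> ?S" by auto
  then have "?S \<noteq> {}" by blast
  then have "Sup ?S \<le> g"
  proof (rule cSup_least)
    fix x assume x: "x \<in> ?S"
    show "x \<le> g"
    proof (cases "0 \<le> x")
      case True
      then obtain psi where "psi \<in> H" "overlaps n m (nat x) eta psi"
        using x Ov_singleton_nonempty_iff by blast
      then show ?thesis using bound[OF eta] True by fastforce
    qed (use assms(5) in simp)
  qed
  then show "a \<le> g" by (simp add: a gapAt_def)
qed

section \<open>The least refinement with bounded gap\<close>

locale gap_refinement =
  fixes d n m g :: nat and L :: "bspl set" and phi :: bspl
  assumes n_pos: "1 \<le> n" and m_pos: "1 \<le> m"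
    and lineage_L: "lineage d n m L"
    and gap_L: "gap d n m (hgen d n m L) \<le> int g"
    and phi_hgen: "phi \<in> hgen d n m L"
begin

abbreviation H :: "bspl set" where "H \<equiv> hgen d n m L"

definition reach :: "bspl set" where
  "reach = (\<Union>k. Ovpow d n m k {phi} (- int g) H)"

lemma finite_H: "finite H"
  using lineage_L finite_hgen by (simp add: lineage_def)

lemma H_subset_allB: "H \<subseteq> allB d"
  using lineage_L hgen_subset_allB by (simp add: lineage_def)

lemma reach_subset_H: "reach \<subseteq> H"
  using Ovpow_subset[OF phi_hgen] unfolding reach_def by blast

lemma phi_in_reach: "phi \<in> reach"
proof -
  have "phi \<in> Ovpow d n m 0 {phi} (- int g) H" by simp
  then show ?thesis unfolding reach_def by blast
qed

lemma reach_step: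
  assumes "chi \<in> reach" and "psi \<in> H" and "overlaps n m g chi psi"
  shows "psi \<in> reach"
proof -
  obtain k where "chi \<in> Ovpow d n m k {phi} (- int g) H" using assms(1) by (auto simp: reach_def)
  then have "psi \<in> Ovpow d n m (Suc k) {phi} (- int g) H"
    using assms(2,3) H_subset_allB by (auto simp: mem_Ov_iff)
  then show ?thesis unfolding reach_def by blast
qed

lemma reach_minimal:
  assumes "phi \<in> S"
    and closed: "\<And>chi psi. chi \<in> S \<Longrightarrow> psi \<in> H \<Longrightarrow> overlaps n m g chi psi \<Longrightarrow> psi \<in> S"
  shows "reach \<subseteq> S"
proof -
  have "Ovpow d n m k {phi} (- int g) H \<subseteq> S" for k
  proof (induction k)
    case 0
    show ?case using assms(1) by simp
  next
    case (Suc k)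
    show ?case
    proof
      fix psi assume "psi \<in> Ovpow d n m (Suc k) {phi} (- int g) H"
      then obtain chi where "chi \<in> Ovpow d n m k {phi} (- int g) H"
        and "psi \<in> H" and "overlaps n m g chi psi"
        unfolding Ovpow_Suc mem_Ov_iff by blast
      then show "psi \<in> S" using Suc.IH closed by blast
    qed
  qed
  then show ?thesis by (auto simp: reach_def)
qed

lemma lineage_L_reach: "lineage d n m (L \<union> reach)"
proof -
  have "chBs n m L \<subseteq> chBs n m (L \<union> reach)" by (rule chBs_mono) blast
  then have "L \<union> H \<subseteq> B0 d m \<union> chBs n m (L \<union> reach)"
    using lineage_L by (auto simp: hgen_def lineage_def)
  moreover have "finite (L \<union> reach)"
    using lineage_L finite_H reach_subset_H finite_subset by (auto simp: lineage_def)
  ultimately show ?thesis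
    using lineage_L reach_subset_H H_subset_allB by (auto simp: lineage_def)
qed

lemma hgen_L_reach_cases:
  assumes "x \<in> hgen d n m (L \<union> reach)"
  obtains "x \<in> H" | chi where "chi \<in> reach" and "x \<in> chB n m chi"
  using assms by (auto simp: hgen_def chBs_def)

text \<open>An overlap ending in a new generator element loses one level of depth when that element
  is replaced by its parent in \<open>reach\<close>; depth exactly \<open>g\<close> from \<open>reach\<close> into \<open>H\<close> is excluded
  because \<open>reach\<close> is closed.\<close>

lemma overlaps_into_hgen_L_reach:
  assumes "chi \<in> H" and "psi \<in> hgen d n m (L \<union> reach)" and "overlaps n m j chi psi"
  shows "j \<le> g \<and> (chi \<in> reach \<longrightarrow> j < g)"
  using assms(2)
proof (cases rule: hgen_L_reach_cases)
  case 1
  have "int j \<le> int g"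
    using overlaps_le_gap[OF finite_H H_subset_allB assms(1) 1 assms(3)] gap_L by simp
  moreover have "j \<noteq> g" if "chi \<in> reach"
    using reach_step[OF that 1] assms(2,3) by (auto simp: hgen_def)
  ultimately show ?thesis by auto
next
  case (2 chi')
  have "overlaps n m (Suc j) chi chi'" by (rule overlaps_parent_right[OF n_pos assms(3) 2(2)])
  then have "int (Suc j) \<le> int g"
    using overlaps_le_gap[OF finite_H H_subset_allB assms(1)] 2(1) reach_subset_H gap_L
    by (meson order_trans subsetD)
  then show ?thesis by simp
qed

lemma gap_hgen_L_reach: "gap d n m (hgen d n m (L \<union> reach)) \<le> int g"
proof (rule gap_leI)
  have "finite (L \<union> reach)" and "L \<union> reach \<subseteq> allB d"
    using lineage_L_reach by (auto simp: lineage_def)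
  then show "finite (hgen d n m (L \<union> reach))" "hgen d n m (L \<union> reach) \<subseteq> allB d"
    by (simp_all add: finite_hgen hgen_subset_allB)
  show "hgen d n m (L \<union> reach) \<noteq> {}"
    using hgen_nonempty[OF n_pos \<open>finite (L \<union> reach)\<close>] phi_in_reach by blast
  fix eta psi j
  assume eta: "eta \<in> hgen d n m (L \<union> reach)" and psi: "psi \<in> hgen d n m (L \<union> reach)"
    and overlap: "overlaps n m j eta psi"
  from eta show "int j \<le> int g"
  proof (cases rule: hgen_L_reach_cases)
    case 1
    then show ?thesis using overlaps_into_hgen_L_reach psi overlap by simp
  next
    case (2 chi)
    show ?thesis
    proof (cases j)
      case (Suc j')
      then have "overlaps n m j' chi psi"
        using overlaps_parent_left[OF n_pos _ 2(2)] overlap by simp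
      then have "j' < g" using overlaps_into_hgen_L_reach 2(1) reach_subset_H psi by blast
      then show ?thesis using Suc by simp
    qed simp
  qed
qed (use m_pos in simp_all)

lemma reach_subset_lineage:
  assumes "lineage d n m Ls" and "L \<union> {phi} \<subseteq> Ls" and "gap d n m (hgen d n m Ls) \<le> int g"
  shows "reach \<subseteq> Ls"
proof (rule reach_minimal)
  show "phi \<in> Ls" using assms(2) by simp
  fix chi psi assume "chi \<in> Ls" and psi: "psi \<in> H" and overlap: "overlaps n m g chi psi"
  show "psi \<in> Ls"
  proof (rule ccontr)
    assume "psi \<notin> Ls"
    moreover have "psi \<in> B0 d m \<union> chBs n m Ls"
      using psi chBs_mono[of L Ls] assms(2) by (auto simp: hgen_def)
    ultimately have "psi \<in> hgen d n m Ls" by (simp add: hgen_def)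
    moreover obtain eta j where "eta \<in> hgen d n m Ls" "g < j" "overlaps n m j eta psi"
      using lineage_overlaps_hgen[OF assms(1) n_pos m_pos \<open>chi \<in> Ls\<close> overlap] by blast
    moreover have "finite Ls" "Ls \<subseteq> allB d" using assms(1) by (auto simp: lineage_def)
    ultimately have "int j \<le> gap d n m (hgen d n m Ls)"
      by (meson overlaps_le_gap finite_hgen hgen_subset_allB)
    then show False using assms(3) \<open>g < j\<close> by simp
  qed
qed

lemma reach_lev:
  assumes "0 < g" and "psi \<in> reach" and "psi \<noteq> phi"
  shows "\<exists>k\<ge>1. int k \<le> int (lev phi) div int g \<and> psi \<in> Ovpow d n m k {phi} (- int g) (allB d)"
proof -
  obtain k where k: "psi \<in> Ovpow d n m k {phi} (- int g) H" using assms(2) by (auto simp: reach_def)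
  have "int g * int k \<le> int (lev phi)"
    using lev_Ovpow[OF k] by (simp add: mult.commute flip: of_nat_mult)
  then have "int k \<le> int (lev phi) div int g" using int_le_div_iff assms(1) by simp
  moreover have "1 \<le> k" using k assms(3) by (cases k) auto
  moreover have "psi \<in> Ovpow d n m k {phi} (- int g) (allB d)"
    using Ovpow_mono[OF H_subset_allB] k by blast
  ultimately show ?thesis by blast
qed

end

theorem lemma8p2:
  fixes d n m :: nat and g :: int and L :: "bspl set" and phi :: bspl
  assumes "d \<ge> 1" and "n \<ge> 2" and "m \<ge> 2"
    and "g \<ge> 1"
    and "lineage d n m L"
    and "gap d n m (hgen d n m L) \<le> g"
    and "phi \<in> hgen d n m L"
  shows "\<exists>Lb. lineage d n m Lb \<and> L \<union> {phi} \<subseteq> Lb \<and> gap d n m (hgen d n m Lb) \<le> g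
            \<and> (\<forall>Ls. lineage d n m Ls \<and> L \<union> {phi} \<subseteq> Ls \<and> gap d n m (hgen d n m Ls) \<le> g
                    \<longrightarrow> Lb \<subseteq> Ls)
            \<and> (\<forall>psi \<in> (Lb - L) - {phi}. \<exists>k::nat. 1 \<le> k \<and> int k \<le> int (lev phi) div g
                    \<and> psi \<in> Ovpow d n m k {phi} (- g) (allB d))"
proof -
  have g: "int (nat g) = g" using assms(4) by simp
  interpret gap_refinement d n m "nat g" L phi
    using assms by unfold_locales (auto simp: g)
  show ?thesis
  proof (intro exI[of _ "L \<union> reach"] conjI allI impI ballI)
    show "lineage d n m (L \<union> reach)" by (rule lineage_L_reach)
    show "L \<union> {phi} \<subseteq> L \<union> reach" using phi_in_reach by blast
    show "gap d n m (hgen d n m (L \<union> reach)) \<le> g" using gap_hgen_L_reach g by simp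
  next
    fix Ls assume "lineage d n m Ls \<and> L \<union> {phi} \<subseteq> Ls \<and> gap d n m (hgen d n m Ls) \<le> g"
    then show "L \<union> reach \<subseteq> Ls" using reach_subset_lineage g by auto
  next
    fix psi assume "psi \<in> (L \<union> reach - L) - {phi}"
    then show "\<exists>k::nat. 1 \<le> k \<and> int k \<le> int (lev phi) div g \<and> psi \<in> Ovpow d n m k {phi} (- g) (allB d)"
      using reach_lev[of psi] assms(4) g by auto
  qed
qed

end
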